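(* For $(t,s)\in\Lambda$ and $x\in\mathbb R^d$ define the Borel measure $g_{t,s}(x,dy)$ by $g_{t,t}(x,dy)=\delta_x$ and $g_{t,s}(x,A)=\int_Ag(t,s,x,y)\,dy$ for $t>s$ and Borel $A\subset\mathbb R^d$. Then for $t>s$ each measure $g_{t,s}(x,dy)$ is equivalent to Lebesgue measure on the Borel sets (same null sets), and for all $t\ge r\ge s$ in $I$, $x\in\mathbb R^d$ and Borel $A\subset\mathbb R^d$, $g_{t,s}(x,A)=\int_{\mathbb R^d}g_{r,s}(y,A)\,g_{t,r}(x,dy)$.
   Context: Let $d\ge1$, $\alpha\in(0,1)$, $I\subseteq\mathbb R$ either $\mathbb R$ or a right half-line, $\Lambda=\{(t,s)\in I\times I:t\ge s\}$. For $t\in I$, $(\mathcal A(t)\psi)(x)=\sum_{i,j}q_{ij}(t,x)D_{ij}\psi(x)+\sum_ib_i(t,x)D_i\psi(x)-c(t,x)\psi(x)$, with: $q_{ij},b_i,c\in C^{\alpha/2,\alpha}_{\rm loc}(I\times\mathbb R^d)$; $\inf c>-\infty$; $Q=(q_{ij})$ symmetric with $\langle Q(t,x)\xi,\xi\rangle\ge\eta(t,x)|\xi|^2$, $\inf\eta>0$; for every bounded interval $J\subset I$ there are positive $\varphi_J\in C^2(\mathbb R^d)$ with $\varphi_J\to+\infty$ at infinity and $\lambda_J$ with $\mathcal A(t)\varphi_J\le\lambda_J\varphi_J$ on $J\times\mathbb R^d$. $G(t,s)$ is the evolution operator on $C_b(\mathbb R^d)$ given by $G(t,s)f=u_f(t,\cdot)$,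 $u_f$ the unique solution, bounded on strips $[s,T]\times\mathbb R^d$ and in $C([s,\infty)\times\mathbb R^d)\cap C^{1+\alpha/2,2+\alpha}_{\rm loc}((s,\infty)\times\mathbb R^d)$, of $D_tu=\mathcal A(t)u$, $u(s)=f$. $g$ is its Green function: a positive function with $(G(t,s)f)(x)=\int g(t,s,x,y)f(y)dy$ for all $f\in C_b(\mathbb R^d)$, $t>s$. *)

theory Defs
  imports "HOL-Analysis.Analysis" "HOL-Probability.Probability"
begin

text \<open>Points of R^d are vectors of type real^'n (d = CARD('n) \<ge> 1).
  Time-space functions are curried: u :: real \<Rightarrow> real^'n \<Rightarrow> real.\<close>

definition pd :: "'n::finite \<Rightarrow> (real^'n \<Rightarrow> real) \<Rightarrow> real^'n \<Rightarrow> real" where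
  "pd i \<psi> x = deriv (\<lambda>h. \<psi> (x + h *\<^sub>R axis i 1)) 0"

definition pdiff_at :: "'n::finite \<Rightarrow> (real^'n \<Rightarrow> real) \<Rightarrow> real^'n \<Rightarrow> bool" where
  "pdiff_at i \<psi> x \<longleftrightarrow> (\<lambda>h. \<psi> (x + h *\<^sub>R axis i 1)) differentiable (at 0)"

definition C2 :: "(real^'n::finite \<Rightarrow> real) \<Rightarrow> bool" where
  "C2 \<psi> \<longleftrightarrow> (\<forall>i x. pdiff_at i \<psi> x) \<and> (\<forall>i j x. pdiff_at i (pd j \<psi>) x)
     \<and> continuous_on UNIV \<psi> \<and> (\<forall>i. continuous_on UNIV (pd i \<psi>))
     \<and> (\<forall>i j. continuous_on UNIV (pd i (pd j \<psi>)))"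

definition holder_loc :: "real \<Rightarrow> (real \<times> (real^'n::finite)) set \<Rightarrow> (real \<Rightarrow> real^'n \<Rightarrow> real) \<Rightarrow> bool" where
  "holder_loc \<alpha> S f \<longleftrightarrow>
     (\<forall>K. compact K \<and> K \<subseteq> S \<longrightarrow>
        (\<exists>C. \<forall>p\<in>K. \<forall>p'\<in>K. \<bar>f (fst p) (snd p) - f (fst p') (snd p')\<bar>
              \<le> C * (\<bar>fst p - fst p'\<bar> powr (\<alpha>/2) + norm (snd p - snd p') powr \<alpha>)))"

definition dt :: "(real \<Rightarrow> real^'n \<Rightarrow> real) \<Rightarrow> real \<Rightarrow> real^'n \<Rightarrow> real" where
  "dt u t x = deriv (\<lambda>\<tau>. u \<tau> x) t"

definition C12_loc :: "real \<Rightarrow> (real \<times> (real^'n::finite)) set \<Rightarrow> (real \<Rightarrow> real^'n \<Rightarrow> real) \<Rightarrow> bool" where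
  "C12_loc \<alpha> S u \<longleftrightarrow>
     (\<forall>(t,x)\<in>S. (\<lambda>\<tau>. u \<tau> x) differentiable (at t) \<and> (\<forall>i. pdiff_at i (u t) x)
                  \<and> (\<forall>i j. pdiff_at i (pd j (u t)) x))
     \<and> holder_loc \<alpha> S u \<and> holder_loc \<alpha> S (dt u)
     \<and> (\<forall>i. holder_loc \<alpha> S (\<lambda>t. pd i (u t)))
     \<and> (\<forall>i j. holder_loc \<alpha> S (\<lambda>t. pd i (pd j (u t))))"

definition Aop :: "('n::finite \<Rightarrow> 'n \<Rightarrow> real \<Rightarrow> real^'n \<Rightarrow> real) \<Rightarrow> ('n \<Rightarrow> real \<Rightarrow> real^'n \<Rightarrow> real)
     \<Rightarrow> (real \<Rightarrow> real^'n \<Rightarrow> real) \<Rightarrow> real \<Rightarrow> (real^'n \<Rightarrow> real) \<Rightarrow> real^'n \<Rightarrow> real" where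
  "Aop q b c t \<psi> x = (\<Sum>i\<in>UNIV. \<Sum>j\<in>UNIV. q i j t x * pd i (pd j \<psi>) x)
                      + (\<Sum>i\<in>UNIV. b i t x * pd i \<psi> x) - c t x * \<psi> x"

definition Cb :: "(real^'n::finite \<Rightarrow> real) \<Rightarrow> bool" where
  "Cb f \<longleftrightarrow> continuous_on UNIV f \<and> bounded (range f)"

definition cauchy_sol :: "real \<Rightarrow> ('n::finite \<Rightarrow> 'n \<Rightarrow> real \<Rightarrow> real^'n \<Rightarrow> real) \<Rightarrow> ('n \<Rightarrow> real \<Rightarrow> real^'n \<Rightarrow> real)
     \<Rightarrow> (real \<Rightarrow> real^'n \<Rightarrow> real) \<Rightarrow> real \<Rightarrow> (real^'n \<Rightarrow> real) \<Rightarrow> (real \<Rightarrow> real^'n \<Rightarrow> real) \<Rightarrow> bool" where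
  "cauchy_sol \<alpha> q b c s f u \<longleftrightarrow>
     continuous_on ({s..} \<times> UNIV) (\<lambda>p. u (fst p) (snd p))
     \<and> (\<forall>T. \<exists>M. \<forall>t\<in>{s..T}. \<forall>x. \<bar>u t x\<bar> \<le> M)
     \<and> C12_loc \<alpha> ({s<..} \<times> UNIV) u
     \<and> (\<forall>t>s. \<forall>x. dt u t x = Aop q b c t (u t) x)
     \<and> (\<forall>x. u s x = f x)"

definition green_op :: "(real \<Rightarrow> real \<Rightarrow> real^'n::finite \<Rightarrow> real^'n \<Rightarrow> real) \<Rightarrow> real
     \<Rightarrow> (real^'n \<Rightarrow> real) \<Rightarrow> real \<Rightarrow> real^'n \<Rightarrow> real" where
  "green_op g s f t x = (if s < t then (LINT y|lborel. g t s x y * f y) else f x)"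

definition green_measure :: "(real \<Rightarrow> real \<Rightarrow> real^'n::finite \<Rightarrow> real^'n \<Rightarrow> real)
     \<Rightarrow> real \<Rightarrow> real \<Rightarrow> real^'n \<Rightarrow> (real^'n) measure" where
  "green_measure g t s x =
     (if t = s then return lborel x else density lborel (\<lambda>y. ennreal (g t s x y)))"

definition admissible_interval :: "real set \<Rightarrow> bool" where
  "admissible_interval I \<longleftrightarrow> I = UNIV \<or> (\<exists>a. I = {a<..} \<or> I = {a..})"

end

theory Submission
  imports Defs
begin

text \<open>Since the Green function is positive, each measure g_{t,s}(x,dy) has a strictly positive
  density and hence the same null sets as Lebesgue measure. Uniqueness for the Cauchy problem gives
  the evolution law G(t,s) = G(t,r) G(r,s) on C_b, which is the Chapman--Kolmogorov identity tested
  against nonnegative bounded continuous functions. Continuous cutoffs increasing to the indicator of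
  an open set carry the identity, and the measurability of y \<mapsto> g_{r,s}(y,A), over to open sets
  by monotone convergence. As the measures are finite and the open sets form an intersection-stable
  generator of the Borel sets, Dynkin's \<pi>-\<lambda> theorem extends both to all Borel sets.\<close>

text \<open>The case U = UNIV is separate because infdist y {} = 0.\<close>

definition open_cutoff :: "'a::metric_space set \<Rightarrow> nat \<Rightarrow> 'a \<Rightarrow> real" where
  "open_cutoff U n y = (if U = UNIV then 1 else min 1 (real n * infdist y (- U)))"

lemma continuous_on_open_cutoff: "continuous_on UNIV (open_cutoff U n)"
  unfolding open_cutoff_def by (cases "U = UNIV") (auto intro!: continuous_intros)

lemma open_cutoff_nonneg: "0 \<le> open_cutoff U n y"
  unfolding open_cutoff_def by (auto simp: infdist_nonneg)

lemma open_cutoff_le_one: "open_cutoff U n y \<le> 1"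
  unfolding open_cutoff_def by auto

lemma bounded_range_open_cutoff: "bounded (range (open_cutoff U n))"
  unfolding bounded_iff
  by (auto intro!: exI[of _ 1] simp: abs_of_nonneg open_cutoff_nonneg open_cutoff_le_one)

lemma open_cutoff_mono:
  assumes "m \<le> n"
  shows "open_cutoff U m y \<le> open_cutoff U n y"
proof -
  have "real m * infdist y (- U) \<le> real n * infdist y (- U)"
    using assms by (intro mult_right_mono) (auto simp: infdist_nonneg)
  then show ?thesis
    unfolding open_cutoff_def by auto
qed

lemma open_cutoff_LIMSEQ:
  assumes "open U"
  shows "(\<lambda>n. open_cutoff U n y) \<longlonglongrightarrow> indicator U y"
proof (cases "U \<noteq> UNIV \<and> y \<in> U")
  case True
  then have "infdist y (- U) > 0"
    using infdist_pos_not_in_closed[of "- U" y] assms by auto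
  then obtain N :: nat where "1 < N * infdist y (- U)"
    using reals_Archimedean2[of "1 / infdist y (- U)"] by (auto simp: divide_less_eq)
  then have "1 \<le> real n * infdist y (- U)" if "N \<le> n" for n
    using \<open>infdist y (- U) > 0\<close> that by (smt (verit) mult_right_mono of_nat_le_iff)
  then have "eventually (\<lambda>n. open_cutoff U n y = 1) sequentially"
    unfolding eventually_sequentially open_cutoff_def using True by (auto intro!: exI[of _ N])
  then show ?thesis
    using True by (simp add: tendsto_eventually)
next
  case False
  then have "open_cutoff U n y = indicator U y" for n
    by (auto simp: open_cutoff_def infdist_zero)
  then show ?thesis
    by simp
qed

lemma nn_integral_open_cutoff_LIMSEQ:
  assumes "sets M = sets borel" "open U"
  shows "(\<lambda>n. \<integral>\<^sup>+ y. open_cutoff U n y \<partial>M) \<longlonglongrightarrow> emeasure M U"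
proof -
  have "(\<lambda>n. \<integral>\<^sup>+ y. open_cutoff U n y \<partial>M) \<longlonglongrightarrow> (\<integral>\<^sup>+ y. indicator U y \<partial>M)"
  proof (rule nn_integral_LIMSEQ)
    show "incseq (\<lambda>n y. ennreal (open_cutoff U n y))"
      by (auto simp: incseq_def le_fun_def intro!: ennreal_leI open_cutoff_mono)
    show "(\<lambda>y. ennreal (open_cutoff U n y)) \<in> borel_measurable M" for n
      unfolding measurable_cong_sets[OF assms(1) refl]
      by (intro measurable_compose[OF _ measurable_ennreal] borel_measurable_continuous_onI
          continuous_on_open_cutoff)
    show "(\<lambda>n. ennreal (open_cutoff U n y)) \<longlonglongrightarrow> indicator U y" for y
      using tendsto_ennrealI[OF open_cutoff_LIMSEQ[OF assms(2)]] by (simp add: ennreal_indicator)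
  qed
  then show ?thesis
    using assms by (simp add: nn_integral_indicator)
qed

lemma measurable_emeasure_finite_kernel_generated:
  assumes eq: "sets N = sigma_sets \<Omega> G" and "Int_stable G" "G \<subseteq> Pow \<Omega>"
    and sets: "\<And>a. a \<in> space M \<Longrightarrow> sets (K a) = sets N"
    and fin: "\<And>a. a \<in> space M \<Longrightarrow> finite_measure (K a)"
    and gen: "\<And>A. A \<in> G \<Longrightarrow> (\<lambda>a. emeasure (K a) A) \<in> borel_measurable M"
    and \<Omega>: "(\<lambda>a. emeasure (K a) \<Omega>) \<in> borel_measurable M"
    and A: "A \<in> sets N"
  shows "(\<lambda>a. emeasure (K a) A) \<in> borel_measurable M"
proof -
  interpret G: sigma_algebra \<Omega> "sigma_sets \<Omega> G"
    using \<open>G \<subseteq> Pow \<Omega>\<close> by (rule sigma_algebra_sigma_sets)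
  from \<open>Int_stable G\<close> \<open>G \<subseteq> Pow \<Omega>\<close> A show ?thesis
    unfolding eq
  proof (induction rule: sigma_sets_induct_disjoint)
    case (basic A)
    then show ?case by (rule gen)
  next
    case empty
    then show ?case by simp
  next
    case (compl A)
    have "(\<lambda>a. emeasure (K a) (\<Omega> - A)) \<in> borel_measurable M \<longleftrightarrow>
        (\<lambda>a. emeasure (K a) \<Omega> - emeasure (K a) A) \<in> borel_measurable M"
      using G.top G.sets_into_space sets eq compl finite_measure.emeasure_finite[OF fin]
      by (intro measurable_cong emeasure_Diff) auto
    with compl \<Omega> show ?case
      by simp
  next
    case (union F)
    have "(\<lambda>a. emeasure (K a) (\<Union>i. F i)) \<in> borel_measurable M \<longleftrightarrow>
        (\<lambda>a. \<Sum>i. emeasure (K a) (F i)) \<in> borel_measurable M"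
      using sets union eq by (intro measurable_cong suminf_emeasure[symmetric]) auto
    with union show ?case
      by auto
  qed
qed

lemma emeasure_eq_nn_integral_kernel_generated:
  assumes eq: "sets \<mu> = sigma_sets \<Omega> G" and "Int_stable G" "G \<subseteq> Pow \<Omega>" "\<Omega> \<in> G"
    and fin: "emeasure \<mu> \<Omega> \<noteq> \<infinity>"
    and sets: "\<And>a. a \<in> space N \<Longrightarrow> sets (K a) = sets \<mu>"
    and meas: "\<And>A. A \<in> sets \<mu> \<Longrightarrow> (\<lambda>a. emeasure (K a) A) \<in> borel_measurable N"
    and gen: "\<And>A. A \<in> G \<Longrightarrow> emeasure \<mu> A = (\<integral>\<^sup>+ a. emeasure (K a) A \<partial>N)"
    and A: "A \<in> sets \<mu>"
  shows "emeasure \<mu> A = (\<integral>\<^sup>+ a. emeasure (K a) A \<partial>N)"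
proof -
  interpret sigma_algebra \<Omega> "sets \<mu>"
    unfolding eq using \<open>G \<subseteq> Pow \<Omega>\<close> by (rule sigma_algebra_sigma_sets)
  define \<nu> where "\<nu> = measure_of \<Omega> (sets \<mu>) (\<lambda>A. \<integral>\<^sup>+ a. emeasure (K a) A \<partial>N)"
  have emeasure_\<nu>: "emeasure \<nu> B = (\<integral>\<^sup>+ a. emeasure (K a) B \<partial>N)" if "B \<in> sets \<mu>" for B
    unfolding \<nu>_def
  proof (rule emeasure_measure_of_sigma[OF sigma_algebra_axioms _ _ that])
    show "positive (sets \<mu>) (\<lambda>A. \<integral>\<^sup>+ a. emeasure (K a) A \<partial>N)"
      by (simp add: positive_def)
    show "countably_additive (sets \<mu>) (\<lambda>A. \<integral>\<^sup>+ a. emeasure (K a) A \<partial>N)"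
    proof (rule countably_additiveI)
      fix F :: "nat \<Rightarrow> _"
      assume F: "range F \<subseteq> sets \<mu>" "disjoint_family F"
      have "(\<Sum>i. \<integral>\<^sup>+ a. emeasure (K a) (F i) \<partial>N) = (\<integral>\<^sup>+ a. (\<Sum>i. emeasure (K a) (F i)) \<partial>N)"
        using F meas by (intro nn_integral_suminf[symmetric]) auto
      also have "\<dots> = (\<integral>\<^sup>+ a. emeasure (K a) (\<Union>i. F i) \<partial>N)"
        using F sets by (intro nn_integral_cong suminf_emeasure) auto
      finally show "(\<Sum>i. \<integral>\<^sup>+ a. emeasure (K a) (F i) \<partial>N) = (\<integral>\<^sup>+ a. emeasure (K a) (\<Union>i. F i) \<partial>N)" .
    qed
  qed
  have "\<mu> = \<nu>"
  proof (rule measure_eqI_generator_eq[OF \<open>Int_stable G\<close> \<open>G \<subseteq> Pow \<Omega>\<close> _ eq])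
    show "emeasure \<mu> X = emeasure \<nu> X" if "X \<in> G" for X
      using that gen emeasure_\<nu> eq by auto
    show "sets \<nu> = sigma_sets \<Omega> G"
      unfolding \<nu>_def eq[symmetric] by (simp add: sets_measure_of[OF space_closed] sigma_sets_eq)
    show "range (\<lambda>_. \<Omega>) \<subseteq> G" "(\<Union>i. \<Omega>) = \<Omega>" "emeasure \<mu> \<Omega> \<noteq> \<infinity>"
      using \<open>\<Omega> \<in> G\<close> fin by auto
  qed
  then show ?thesis
    using A emeasure_\<nu> by simp
qed

lemma measurable_emeasure_open_kernel_from_continuous:
  fixes K :: "'b \<Rightarrow> 'a::metric_space measure"
  assumes sets: "\<And>z. sets (K z) = sets borel"
    and meas: "\<And>f. continuous_on UNIV f \<Longrightarrow> bounded (range f) \<Longrightarrow> (\<And>y. 0 \<le> f y) \<Longrightarrow>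
                 (\<lambda>z. \<integral>\<^sup>+ y. f y \<partial>K z) \<in> borel_measurable N"
    and "open U"
  shows "(\<lambda>z. emeasure (K z) U) \<in> borel_measurable N"
proof (rule borel_measurable_LIMSEQ_order)
  show "(\<lambda>n. \<integral>\<^sup>+ y. open_cutoff U n y \<partial>K z) \<longlonglongrightarrow> emeasure (K z) U" for z
    using nn_integral_open_cutoff_LIMSEQ[OF sets \<open>open U\<close>] .
  show "(\<lambda>z. \<integral>\<^sup>+ y. open_cutoff U n y \<partial>K z) \<in> borel_measurable N" for n
    by (intro meas continuous_on_open_cutoff bounded_range_open_cutoff open_cutoff_nonneg)
qed

lemma measurable_emeasure_kernel_from_continuous:
  fixes K :: "'b \<Rightarrow> 'a::metric_space measure"
  assumes sets: "\<And>z. sets (K z) = sets borel"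
    and fin: "\<And>z. finite_measure (K z)"
    and meas: "\<And>f. continuous_on UNIV f \<Longrightarrow> bounded (range f) \<Longrightarrow> (\<And>y. 0 \<le> f y) \<Longrightarrow>
                 (\<lambda>z. \<integral>\<^sup>+ y. f y \<partial>K z) \<in> borel_measurable N"
    and "A \<in> sets borel"
  shows "(\<lambda>z. emeasure (K z) A) \<in> borel_measurable N"
proof (rule measurable_emeasure_finite_kernel_generated[OF sets_borel _ _ sets fin])
  show "Int_stable {S::'a set. open S}"
    by (auto simp: Int_stable_def)
  show "(\<lambda>z. emeasure (K z) U) \<in> borel_measurable N" if "U \<in> {S. open S}" for U
    using that by (intro measurable_emeasure_open_kernel_from_continuous[OF sets meas]) auto
  then show "(\<lambda>z. emeasure (K z) UNIV) \<in> borel_measurable N"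
    by simp
qed (use \<open>A \<in> sets borel\<close> in auto)

lemma emeasure_open_eq_nn_integral_kernel_from_continuous:
  fixes K :: "'b \<Rightarrow> 'a::metric_space measure"
  assumes sets_\<mu>: "sets \<mu> = sets borel" and sets: "\<And>z. sets (K z) = sets borel"
    and meas: "\<And>f. continuous_on UNIV f \<Longrightarrow> bounded (range f) \<Longrightarrow> (\<And>y. 0 \<le> f y) \<Longrightarrow>
                 (\<lambda>z. \<integral>\<^sup>+ y. f y \<partial>K z) \<in> borel_measurable N"
    and eq: "\<And>f. continuous_on UNIV f \<Longrightarrow> bounded (range f) \<Longrightarrow> (\<And>y. 0 \<le> f y) \<Longrightarrow>
                 (\<integral>\<^sup>+ y. f y \<partial>\<mu>) = (\<integral>\<^sup>+ z. \<integral>\<^sup>+ y. f y \<partial>K z \<partial>N)"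
    and "open U"
  shows "emeasure \<mu> U = (\<integral>\<^sup>+ z. emeasure (K z) U \<partial>N)"
proof -
  let ?T = "\<lambda>n z. \<integral>\<^sup>+ y. open_cutoff U n y \<partial>K z"
  have "(\<integral>\<^sup>+ y. open_cutoff U n y \<partial>\<mu>) = (\<integral>\<^sup>+ z. ?T n z \<partial>N)" for n
    by (intro eq continuous_on_open_cutoff bounded_range_open_cutoff open_cutoff_nonneg)
  moreover have "(\<lambda>n. \<integral>\<^sup>+ z. ?T n z \<partial>N) \<longlonglongrightarrow> (\<integral>\<^sup>+ z. emeasure (K z) U \<partial>N)"
  proof (rule nn_integral_LIMSEQ)
    show "incseq ?T"
      by (auto simp: incseq_def le_fun_def intro!: nn_integral_mono ennreal_leI open_cutoff_mono)
    show "?T n \<in> borel_measurable N" for n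
      by (intro meas continuous_on_open_cutoff bounded_range_open_cutoff open_cutoff_nonneg)
    show "(\<lambda>n. ?T n z) \<longlonglongrightarrow> emeasure (K z) U" for z
      using nn_integral_open_cutoff_LIMSEQ[OF sets \<open>open U\<close>] .
  qed
  ultimately have "(\<lambda>n. \<integral>\<^sup>+ y. open_cutoff U n y \<partial>\<mu>) \<longlonglongrightarrow> (\<integral>\<^sup>+ z. emeasure (K z) U \<partial>N)"
    by simp
  then show ?thesis
    using nn_integral_open_cutoff_LIMSEQ[OF sets_\<mu> \<open>open U\<close>] LIMSEQ_unique by blast
qed

lemma emeasure_eq_nn_integral_kernel_from_continuous:
  fixes K :: "'b \<Rightarrow> 'a::metric_space measure"
  assumes sets_\<mu>: "sets \<mu> = sets borel" and fin_\<mu>: "finite_measure \<mu>"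
    and sets: "\<And>z. sets (K z) = sets borel" and fin: "\<And>z. finite_measure (K z)"
    and meas: "\<And>f. continuous_on UNIV f \<Longrightarrow> bounded (range f) \<Longrightarrow> (\<And>y. 0 \<le> f y) \<Longrightarrow>
                 (\<lambda>z. \<integral>\<^sup>+ y. f y \<partial>K z) \<in> borel_measurable N"
    and eq: "\<And>f. continuous_on UNIV f \<Longrightarrow> bounded (range f) \<Longrightarrow> (\<And>y. 0 \<le> f y) \<Longrightarrow>
                 (\<integral>\<^sup>+ y. f y \<partial>\<mu>) = (\<integral>\<^sup>+ z. \<integral>\<^sup>+ y. f y \<partial>K z \<partial>N)"
    and A: "A \<in> sets borel"
  shows "emeasure \<mu> A = (\<integral>\<^sup>+ z. emeasure (K z) A \<partial>N)"
proof (rule emeasure_eq_nn_integral_kernel_generated[where G = "{S. open S}" and \<Omega> = UNIV])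
  show "sets \<mu> = sigma_sets UNIV {S. open S}"
    unfolding sets_\<mu> by (rule sets_borel)
  show "Int_stable {S::'a set. open S}"
    by (auto simp: Int_stable_def)
  show "emeasure \<mu> UNIV \<noteq> \<infinity>"
    using finite_measure.emeasure_finite[OF fin_\<mu>, of UNIV] sets_\<mu> by simp
  show "sets (K z) = sets \<mu>" for z
    unfolding sets sets_\<mu> ..
  show "(\<lambda>z. emeasure (K z) B) \<in> borel_measurable N" if "B \<in> sets \<mu>" for B
    using measurable_emeasure_kernel_from_continuous[OF sets fin meas] that sets_\<mu> by blast
  show "emeasure \<mu> U = (\<integral>\<^sup>+ z. emeasure (K z) U \<partial>N)" if "U \<in> {S. open S}" for U
    using that by (intro emeasure_open_eq_nn_integral_kernel_from_continuous[OF sets_\<mu> sets meas eq]) auto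
  show "A \<in> sets \<mu>"
    unfolding sets_\<mu> by (rule A)
qed auto

lemma holder_loc_subset: "holder_loc \<alpha> S f \<Longrightarrow> S' \<subseteq> S \<Longrightarrow> holder_loc \<alpha> S' f"
  unfolding holder_loc_def by blast

lemma C12_loc_subset: "C12_loc \<alpha> S u \<Longrightarrow> S' \<subseteq> S \<Longrightarrow> C12_loc \<alpha> S' u"
  unfolding C12_loc_def using holder_loc_subset by blast

lemma cauchy_sol_restart:
  assumes "cauchy_sol \<alpha> q b c s f u" "s \<le> r"
  shows "cauchy_sol \<alpha> q b c r (u r) u"
proof -
  have "{r..} \<times> UNIV \<subseteq> {s..} \<times> UNIV" "{r<..} \<times> UNIV \<subseteq> {s<..} \<times> UNIV"
    using assms(2) by auto
  moreover have "\<exists>M. \<forall>t\<in>{r..T}. \<forall>x. \<bar>u t x\<bar> \<le> M" for T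
    using assms unfolding cauchy_sol_def by (meson atLeastAtMost_iff order_trans)
  ultimately show ?thesis
    using assms unfolding cauchy_sol_def
    by (auto intro: continuous_on_subset C12_loc_subset)
qed

lemma Cb_cauchy_sol:
  assumes "cauchy_sol \<alpha> q b c s f u" "s \<le> r"
  shows "Cb (u r)"
proof -
  have "continuous_on ({s..} \<times> UNIV) (\<lambda>p. u (fst p) (snd p))"
    using assms unfolding cauchy_sol_def by blast
  then have "continuous_on UNIV ((\<lambda>p. u (fst p) (snd p)) \<circ> Pair r)"
    using assms(2) by (intro continuous_on_compose continuous_intros) (auto elim: continuous_on_subset)
  moreover obtain M where "\<forall>t\<in>{s..r}. \<forall>x. \<bar>u t x\<bar> \<le> M"
    using assms unfolding cauchy_sol_def by blast
  then have "bounded (range (u r))"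
    using assms(2) by (auto simp: bounded_iff intro!: exI[of _ M])
  ultimately show ?thesis
    unfolding Cb_def by (simp add: o_def)
qed

lemma sets_green_measure [simp]: "sets (green_measure g t s x) = sets borel"
  by (simp add: green_measure_def)

lemma Cb_const: "Cb (\<lambda>_. a)"
  by (simp add: Cb_def)

locale green_function =
  fixes \<alpha> :: real and I :: "real set"
    and q :: "'n::finite \<Rightarrow> 'n \<Rightarrow> real \<Rightarrow> real^'n \<Rightarrow> real"
    and b :: "'n \<Rightarrow> real \<Rightarrow> real^'n \<Rightarrow> real"
    and c :: "real \<Rightarrow> real^'n \<Rightarrow> real"
    and g :: "real \<Rightarrow> real \<Rightarrow> real^'n \<Rightarrow> real^'n \<Rightarrow> real"
  assumes uniq: "\<And>s f u v. s \<in> I \<Longrightarrow> Cb f \<Longrightarrow> cauchy_sol \<alpha> q b c s f u \<Longrightarrow>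
                 cauchy_sol \<alpha> q b c s f v \<Longrightarrow> \<forall>t\<ge>s. \<forall>x. u t x = v t x"
    and g_pos: "\<And>t s x y. s \<in> I \<Longrightarrow> t \<in> I \<Longrightarrow> s < t \<Longrightarrow> 0 < g t s x y"
    and g_meas: "\<And>t s x. s \<in> I \<Longrightarrow> t \<in> I \<Longrightarrow> s < t \<Longrightarrow> (\<lambda>y. g t s x y) \<in> borel_measurable lborel"
    and g_int: "\<And>t s x f. s \<in> I \<Longrightarrow> t \<in> I \<Longrightarrow> s < t \<Longrightarrow> Cb f \<Longrightarrow>
                 integrable lborel (\<lambda>y. g t s x y * f y)"
    and g_green: "\<And>s f. s \<in> I \<Longrightarrow> Cb f \<Longrightarrow> cauchy_sol \<alpha> q b c s f (green_op g s f)"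
begin

lemma Cb_green_op:
  assumes "s \<in> I" "s \<le> r" "Cb f"
  shows "Cb (green_op g s f r)"
  using Cb_cauchy_sol[OF g_green] assms by blast

lemma green_op_evolution:
  assumes "s \<in> I" "r \<in> I" "s \<le> r" "r \<le> t" "Cb f"
  shows "green_op g s f t x = green_op g r (green_op g s f r) t x"
proof -
  have "cauchy_sol \<alpha> q b c r (green_op g s f r) (green_op g s f)"
    using cauchy_sol_restart[OF g_green] assms by blast
  moreover have "cauchy_sol \<alpha> q b c r (green_op g s f r) (green_op g r (green_op g s f r))"
    using g_green Cb_green_op assms by blast
  ultimately show ?thesis
    using uniq Cb_green_op assms by blast
qed

lemma nn_integral_green_measure:
  assumes "s \<in> I" "t \<in> I" "s < t" "Cb f" "\<And>y. 0 \<le> f y"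
  shows "(\<integral>\<^sup>+ y. f y \<partial>green_measure g t s x) = ennreal (green_op g s f t x)"
proof -
  have "f \<in> borel_measurable lborel"
    using \<open>Cb f\<close> by (simp add: Cb_def borel_measurable_continuous_onI)
  moreover have "(\<lambda>y. g t s x y) \<in> borel_measurable lborel"
    using g_meas assms by blast
  ultimately have "(\<integral>\<^sup>+ y. f y \<partial>green_measure g t s x) = (\<integral>\<^sup>+ y. ennreal (g t s x y) * ennreal (f y) \<partial>lborel)"
    using \<open>s < t\<close> by (simp add: green_measure_def nn_integral_density)
  also have "\<dots> = (\<integral>\<^sup>+ y. ennreal (g t s x y * f y) \<partial>lborel)"
    using assms g_pos by (simp add: ennreal_mult less_imp_le)
  also have "\<dots> = ennreal (green_op g s f t x)"
    using assms g_int g_pos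
    by (simp add: green_op_def nn_integral_eq_integral less_imp_le)
  finally show ?thesis .
qed

lemma finite_measure_green_measure:
  assumes "s \<in> I" "t \<in> I" "s < t"
  shows "finite_measure (green_measure g t s x)"
proof
  have "emeasure (green_measure g t s x) (space (green_measure g t s x))
          = (\<integral>\<^sup>+ y. ennreal 1 \<partial>green_measure g t s x)"
    by simp
  also have "\<dots> = ennreal (green_op g s (\<lambda>_. 1) t x)"
    by (rule nn_integral_green_measure[OF assms Cb_const]) simp
  finally show "emeasure (green_measure g t s x) (space (green_measure g t s x)) \<noteq> \<infinity>"
    by simp
qed

lemma measurable_nn_integral_green_measure:
  assumes "s \<in> I" "r \<in> I" "s < r" "Cb f" "\<And>y. 0 \<le> f y"
  shows "(\<lambda>z. \<integral>\<^sup>+ y. f y \<partial>green_measure g r s z) \<in> borel_measurable borel"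
proof -
  have "green_op g s f r \<in> borel_measurable borel"
    using Cb_green_op[of s r f] assms unfolding Cb_def by (simp add: borel_measurable_continuous_onI)
  then show ?thesis
    using nn_integral_green_measure[OF assms] by simp
qed

lemma nn_integral_green_measure_chapman_kolmogorov:
  assumes "s \<in> I" "r \<in> I" "t \<in> I" "s < r" "r < t" "Cb f" "\<And>y. 0 \<le> f y"
  shows "(\<integral>\<^sup>+ y. f y \<partial>green_measure g t s x)
           = (\<integral>\<^sup>+ z. \<integral>\<^sup>+ y. f y \<partial>green_measure g r s z \<partial>green_measure g t r x)"
proof -
  have nonneg: "0 \<le> green_op g s f r z" for z
    using assms g_pos by (simp add: green_op_def less_imp_le)
  have "(\<integral>\<^sup>+ z. \<integral>\<^sup>+ y. f y \<partial>green_measure g r s z \<partial>green_measure g t r x)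
          = (\<integral>\<^sup>+ z. green_op g s f r z \<partial>green_measure g t r x)"
    using nn_integral_green_measure[OF assms(1,2,4,6,7)] by simp
  also have "\<dots> = ennreal (green_op g r (green_op g s f r) t x)"
    using nn_integral_green_measure[OF assms(2,3,5)] Cb_green_op assms nonneg by simp
  also have "\<dots> = ennreal (green_op g s f t x)"
    using green_op_evolution[of s r t f x] assms by simp
  also have "\<dots> = (\<integral>\<^sup>+ y. f y \<partial>green_measure g t s x)"
    using nn_integral_green_measure assms by simp
  finally show ?thesis ..
qed

lemma measurable_emeasure_green_measure:
  assumes "s \<in> I" "r \<in> I" "s < r" "A \<in> sets borel"
  shows "(\<lambda>z. emeasure (green_measure g r s z) A) \<in> borel_measurable borel"
  using assms finite_measure_green_measure
  by (intro measurable_emeasure_kernel_from_continuous measurable_nn_integral_green_measure)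
     (auto simp: Cb_def)

lemma emeasure_green_measure_chapman_kolmogorov:
  assumes "s \<in> I" "r \<in> I" "t \<in> I" "s \<le> r" "r \<le> t" "A \<in> sets borel"
  shows "emeasure (green_measure g t s x) A
           = (\<integral>\<^sup>+ z. emeasure (green_measure g r s z) A \<partial>green_measure g t r x)"
proof (cases "s = r")
  case True
  then show ?thesis
    using assms by (simp add: green_measure_def nn_integral_indicator)
next
  case False
  then have "s < r"
    using assms by simp
  show ?thesis
  proof (cases "r = t")
    case True
    have "(\<lambda>z. emeasure (green_measure g r s z) A) \<in> borel_measurable (return lborel x)"
      using measurable_emeasure_green_measure[OF assms(1,2) \<open>s < r\<close> assms(6)]
      by (simp cong: measurable_cong_sets)
    then show ?thesis
      using True by (simp add: green_measure_def nn_integral_return)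
  next
    case False
    then have "r < t"
      using assms by simp
    show ?thesis
      using assms \<open>s < r\<close> \<open>r < t\<close> finite_measure_green_measure
        measurable_nn_integral_green_measure nn_integral_green_measure_chapman_kolmogorov
      by (intro emeasure_eq_nn_integral_kernel_from_continuous)
         (auto simp: Cb_def cong: measurable_cong_sets)
  qed
qed

lemma null_sets_green_measure:
  assumes "s \<in> I" "t \<in> I" "s < t"
  shows "null_sets (green_measure g t s x) = null_sets lborel"
proof (rule set_eqI)
  fix N
  have "(\<lambda>y. ennreal (g t s x y)) \<in> borel_measurable lborel"
    using g_meas assms by simp
  moreover have "(y \<in> N \<longrightarrow> ennreal (g t s x y) = 0) \<longleftrightarrow> y \<notin> N" for y
    using g_pos[OF assms, of x y] by (auto simp: ennreal_eq_0_iff)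
  ultimately have "N \<in> null_sets (green_measure g t s x) \<longleftrightarrow> N \<in> sets lborel \<and> (AE y in lborel. y \<notin> N)"
    using \<open>s < t\<close> by (simp add: green_measure_def null_sets_density_iff)
  also have "\<dots> \<longleftrightarrow> N \<in> null_sets lborel"
    by (metis AE_iff_null_sets null_setsD2)
  finally show "N \<in> null_sets (green_measure g t s x) \<longleftrightarrow> N \<in> null_sets lborel" .
qed

end

theorem corollary3p2:
  fixes \<alpha> :: real and I :: "real set"
    and q :: "'n::finite \<Rightarrow> 'n \<Rightarrow> real \<Rightarrow> real^'n \<Rightarrow> real"
    and b :: "'n \<Rightarrow> real \<Rightarrow> real^'n \<Rightarrow> real"
    and c :: "real \<Rightarrow> real^'n \<Rightarrow> real"
    and g :: "real \<Rightarrow> real \<Rightarrow> real^'n \<Rightarrow> real^'n \<Rightarrow> real"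
  assumes alpha: "0 < \<alpha>" "\<alpha> < 1"
    and I: "admissible_interval I"
    and q_reg: "\<And>i j. holder_loc \<alpha> (I \<times> UNIV) (q i j)"
    and b_reg: "\<And>i. holder_loc \<alpha> (I \<times> UNIV) (b i)"
    and c_reg: "holder_loc \<alpha> (I \<times> UNIV) c"
    and c_below: "\<exists>c0. \<forall>t\<in>I. \<forall>x. c0 \<le> c t x"
    and q_sym: "\<And>i j t x. q i j t x = q j i t x"
    and elliptic: "\<exists>\<eta>0>0. \<forall>t\<in>I. \<forall>x \<xi>.
                     (\<Sum>i\<in>UNIV. \<Sum>j\<in>UNIV. q i j t x * \<xi>$i * \<xi>$j) \<ge> \<eta>0 * (norm \<xi>)\<^sup>2"
    and lyapunov: "\<And>J. J \<subseteq> I \<Longrightarrow> is_interval J \<Longrightarrow> bounded J \<Longrightarrow>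
                     \<exists>\<phi> lam. C2 \<phi> \<and> (\<forall>x. 0 < \<phi> x) \<and> filterlim \<phi> at_top at_infinity
                           \<and> (\<forall>t\<in>J. \<forall>x. Aop q b c t \<phi> x \<le> lam * \<phi> x)"
    and uniq: "\<And>s f u v. s \<in> I \<Longrightarrow> Cb f \<Longrightarrow> cauchy_sol \<alpha> q b c s f u \<Longrightarrow>
                 cauchy_sol \<alpha> q b c s f v \<Longrightarrow> \<forall>t\<ge>s. \<forall>x. u t x = v t x"
    and g_pos: "\<And>t s x y. s \<in> I \<Longrightarrow> t \<in> I \<Longrightarrow> s < t \<Longrightarrow> 0 < g t s x y"
    and g_meas: "\<And>t s x. s \<in> I \<Longrightarrow> t \<in> I \<Longrightarrow> s < t \<Longrightarrow> (\<lambda>y. g t s x y) \<in> borel_measurable lborel"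
    and g_int: "\<And>t s x f. s \<in> I \<Longrightarrow> t \<in> I \<Longrightarrow> s < t \<Longrightarrow> Cb f \<Longrightarrow>
                 integrable lborel (\<lambda>y. g t s x y * f y)"
    and g_green: "\<And>s f. s \<in> I \<Longrightarrow> Cb f \<Longrightarrow> cauchy_sol \<alpha> q b c s f (green_op g s f)"
  shows "(\<forall>t\<in>I. \<forall>s\<in>I. \<forall>x. s < t \<longrightarrow> null_sets (green_measure g t s x) = null_sets lborel)
       \<and> (\<forall>t\<in>I. \<forall>r\<in>I. \<forall>s\<in>I. \<forall>x. \<forall>A\<in>sets borel. s \<le> r \<and> r \<le> t \<longrightarrow>
            emeasure (green_measure g t s x) A
              = (\<integral>\<^sup>+ y. emeasure (green_measure g r s y) A \<partial>(green_measure g t r x)))"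
proof -
  \<comment> \<open>The regularity, ellipticity and Lyapunov hypotheses only make the Cauchy problem well
    posed; uniqueness and the Green representation are assumed directly.\<close>
  interpret green_function \<alpha> I q b c g
    using uniq g_pos g_meas g_int g_green by unfold_locales
  show ?thesis
    using null_sets_green_measure emeasure_green_measure_chapman_kolmogorov by blast
qed

end
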